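(* Let $M,N,B$ be positive integers with $N$ a multiple of $B$, let $\Delta>0$, $T=1/\Delta$, $T_B=NT/B$, and let $c>0$, $\lambda>0$, $\alpha\in\mathbb{C}$. Let $\tau_{\max}\in[0,T)$ and $\nu_{\max}\in[0,\Delta)$, let $v\in[0,\lambda\nu_{\max}]$, and let $r:[0,\infty)\to\mathbb{R}$ satisfy $r(nT)/c\in[0,\tau_{\max}]$ for $n=0,\dots,N-1$ and the $B$-fold stop-and-go condition $r(nT)=r(bT_B)$ whenever $bN/B\le n\le (b+1)N/B-1$, $b=0,\dots,B-1$. Let $g_{\rm tx},g_{\rm rx}\in L^2(\mathbb{R})$ be ideal shaping filters, i.e. their cross-ambiguity function $\gamma(\tau,\nu)=\int_{-\infty}^{\infty}g_{\rm tx}(\beta)g_{\rm rx}^*(\beta-\tau)e^{-\mathrm{i}2\pi\nu(\beta-\tau)}d\beta$ satisfies $\gamma(\tau,\nu)=1$ on $[-\tau_{\max},\tau_{\max}]\times[-\nu_{\max},\nu_{\max}]$ and $\gamma(\tau,\nu)=0$ on $[pT-\tau_{\max},pT+\tau_{\max}]\times[q\Delta-\nu_{\max},q\Delta+\nu_{\max}]$ for every pair of integers $(p,q)\neq(0,0)$. Let $\{X_{\rm DD}[k,l]\}$, $k=0,\dots,N-1$, $l=0,\dots,M-1$, be arbitrary complex numbers, and define $$X_{\rm TF}[n,m]=\frac{1}{\sqrt{NM}}\sum_{k=0}^{N-1}\sum_{l=0}^{M-1}X_{\rm DD}[k,l]e^{\mathrm{i}2\pi\left(\frac{nk}{N}-\frac{ml}{M}\right)},$$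 $x_n(t)=\sum_{m=0}^{M-1}X_{\rm TF}[n,m]g_{\rm tx}(t-nT)e^{\mathrm{i}2\pi m\Delta(t-nT)}$, the received signal $y(t)=\sum_{n=0}^{N-1}\alpha\,x_n\!\left(t-\frac{r(nT)}{c}\right)e^{\mathrm{i}2\pi\frac{v}{\lambda}t}$, $$Y_{\rm TF}[n,m]=\int_{-\infty}^{\infty}y(t)g_{\rm rx}^*(t-nT)e^{-\mathrm{i}2\pi m\Delta(t-nT)}dt,\qquad Y_{\rm DD}[k,l]=\frac{1}{\sqrt{NM}}\sum_{n=0}^{N-1}\sum_{m=0}^{M-1}Y_{\rm TF}[n,m]e^{-\mathrm{i}2\pi\left(\frac{nk}{N}-\frac{ml}{M}\right)},$$ for $n,k=0,\dots,N-1$ and $m,l=0,\dots,M-1$. Then for all $k=0,\dots,N-1$, $l=0,\dots,M-1$, $$Y_{\rm DD}[k,l]=\alpha\sum_{k'=0}^{N-1}\sum_{l'=0}^{M-1}X_{\rm DD}[k',l']\,\Phi[k-k',l-l'],$$ where, for integers $k,l$, $$\Phi[k,l]=\frac{1}{B}\sum_{b=0}^{B-1}e^{-\mathrm{i}2\pi\left(\frac{k}{N}-\frac{vT}{\lambda}\right)\frac{bN}{B}}\,\mathcal{D}_{N/B}\!\left(\frac{k}{N}-\frac{vT}{\lambda}\right)\mathcal{D}_{M}\!\left(-\left(\frac{l}{M}-\frac{r(bT_B)\Delta}{c}\right)\right).$$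
   Context: $\mathrm{i}$ is the imaginary unit and $(\cdot)^*$ is complex conjugation. For a positive integer $Q$, $\mathcal{D}_Q(\nu)=\frac{1}{Q}\sum_{q=0}^{Q-1}e^{-\mathrm{i}2\pi\nu q}$ (the periodic sinc / Dirichlet function). Physically, $c$ is the speed of light, $\lambda$ the carrier wavelength, $r$ the excess target range, $v$ the excess range-rate, $\alpha$ the target amplitude, $M$ the number of subcarriers, $N$ the number of symbol intervals, $\Delta$ the subcarrier spacing. *)

theory Defs
  imports "HOL-Analysis.Analysis"
begin

definition dirichlet :: "nat \<Rightarrow> real \<Rightarrow> complex" where
  "dirichlet Q \<nu> = (1 / of_nat Q) * (\<Sum>q<Q. exp (- \<i> * of_real (2 * pi * \<nu> * real q)))"

definition square_integrable :: "(real \<Rightarrow> complex) \<Rightarrow> bool" where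
  "square_integrable g \<longleftrightarrow> g \<in> borel_measurable lborel \<and>
     integrable lborel (\<lambda>t. (norm (g t))\<^sup>2)"

definition cross_amb :: "(real \<Rightarrow> complex) \<Rightarrow> (real \<Rightarrow> complex) \<Rightarrow> real \<Rightarrow> real \<Rightarrow> complex" where
  "cross_amb gtx grx \<tau> \<nu> =
     (LINT \<beta>|lborel. gtx \<beta> * cnj (grx (\<beta> - \<tau>)) * exp (- \<i> * of_real (2 * pi * \<nu> * (\<beta> - \<tau>))))"

definition ideal_filters :: "(real \<Rightarrow> complex) \<Rightarrow> (real \<Rightarrow> complex) \<Rightarrow> real \<Rightarrow> real \<Rightarrow> real \<Rightarrow> real \<Rightarrow> bool" where
  "ideal_filters gtx grx \<tau>max \<nu>max T \<Delta> \<longleftrightarrow>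
     (\<forall>\<tau> \<nu>. \<tau> \<in> {-\<tau>max..\<tau>max} \<and> \<nu> \<in> {-\<nu>max..\<nu>max} \<longrightarrow> cross_amb gtx grx \<tau> \<nu> = 1) \<and>
     (\<forall>p q :: int. (p, q) \<noteq> (0, 0) \<longrightarrow>
        (\<forall>\<tau> \<nu>. \<tau> \<in> {of_int p * T - \<tau>max .. of_int p * T + \<tau>max} \<and>
                 \<nu> \<in> {of_int q * \<Delta> - \<nu>max .. of_int q * \<Delta> + \<nu>max} \<longrightarrow>
                 cross_amb gtx grx \<tau> \<nu> = 0))"

definition X_TF :: "nat \<Rightarrow> nat \<Rightarrow> (nat \<Rightarrow> nat \<Rightarrow> complex) \<Rightarrow> nat \<Rightarrow> nat \<Rightarrow> complex" where
  "X_TF N M XDD n m = (1 / of_real (sqrt (real (N * M)))) *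
     (\<Sum>k<N. \<Sum>l<M. XDD k l *
        exp (\<i> * of_real (2 * pi * (real n * real k / real N - real m * real l / real M))))"

definition x_sym :: "nat \<Rightarrow> real \<Rightarrow> real \<Rightarrow> (real \<Rightarrow> complex) \<Rightarrow> (nat \<Rightarrow> nat \<Rightarrow> complex) \<Rightarrow> nat \<Rightarrow> real \<Rightarrow> complex" where
  "x_sym M T \<Delta> gtx XTF n t = (\<Sum>m<M. XTF n m * gtx (t - real n * T) *
      exp (\<i> * of_real (2 * pi * real m * \<Delta> * (t - real n * T))))"

definition y_rx :: "nat \<Rightarrow> nat \<Rightarrow> real \<Rightarrow> real \<Rightarrow> (real \<Rightarrow> complex) \<Rightarrow> (nat \<Rightarrow> nat \<Rightarrow> complex)
     \<Rightarrow> complex \<Rightarrow> (real \<Rightarrow> real) \<Rightarrow> real \<Rightarrow> real \<Rightarrow> real \<Rightarrow> real \<Rightarrow> complex" where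
  "y_rx N M T \<Delta> gtx XTF \<alpha> r c v lam t = (\<Sum>n<N. \<alpha> * x_sym M T \<Delta> gtx XTF n (t - r (real n * T) / c) *
      exp (\<i> * of_real (2 * pi * (v / lam) * t)))"

definition Y_TF :: "real \<Rightarrow> real \<Rightarrow> (real \<Rightarrow> complex) \<Rightarrow> (real \<Rightarrow> complex) \<Rightarrow> nat \<Rightarrow> nat \<Rightarrow> complex" where
  "Y_TF T \<Delta> grx y n m = (LINT t|lborel. y t * cnj (grx (t - real n * T)) *
      exp (- \<i> * of_real (2 * pi * real m * \<Delta> * (t - real n * T))))"

definition Y_DD :: "nat \<Rightarrow> nat \<Rightarrow> (nat \<Rightarrow> nat \<Rightarrow> complex) \<Rightarrow> nat \<Rightarrow> nat \<Rightarrow> complex" where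
  "Y_DD N M YTF k l = (1 / of_real (sqrt (real (N * M)))) *
     (\<Sum>n<N. \<Sum>m<M. YTF n m *
        exp (- \<i> * of_real (2 * pi * (real n * real k / real N - real m * real l / real M))))"

definition Phi :: "nat \<Rightarrow> nat \<Rightarrow> nat \<Rightarrow> real \<Rightarrow> real \<Rightarrow> real \<Rightarrow> real \<Rightarrow> real \<Rightarrow> (real \<Rightarrow> real) \<Rightarrow> int \<Rightarrow> int \<Rightarrow> complex" where
  "Phi N M B T \<Delta> c v lam r k l =
     (1 / of_nat B) * (\<Sum>b<B.
        exp (- \<i> * of_real (2 * pi * (real_of_int k / real N - v * T / lam) * (real b * real N / real B))) *
        dirichlet (N div B) (real_of_int k / real N - v * T / lam) *
        dirichlet M (- (real_of_int l / real M - r (real b * (real N * T / real B)) * \<Delta> / c)))"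

end

theory Submission
  imports Defs
begin

text \<open>Matched filtering with ideal shaping filters removes every cross term, so the time-frequency
  channel is multiplicative: \<open>Y_TF[n,m] = \<alpha> X_TF[n,m] e^(i2\<pi>(\<nu> nT - m\<Delta> \<tau>_n))\<close> with
  \<open>\<tau>_n = r(nT)/c\<close> and \<open>\<nu> = v/\<lambda>\<close>. The SFFT of the pointwise product of a channel \<open>H\<close> with the
  ISFFT of \<open>X_DD\<close> is the circular convolution of \<open>X_DD\<close> with the SFFT of \<open>H\<close>. Under the
  stop-and-go condition \<open>\<tau>_n\<close> is constant on each of the \<open>B\<close> blocks of \<open>N/B\<close> consecutive
  symbols, so on each block the SFFT of the channel phase splits into a Doppler and a delay
  geometric sum: the two Dirichlet kernels of \<open>Phi\<close>.\<close>

lemma exp_ii_of_real: "exp (\<i> * complex_of_real x) = cis x"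
  by (simp add: cis_conv_exp)

lemma exp_minus_ii_of_real: "exp (- \<i> * complex_of_real x) = cis (- x)"
  by (simp add: cis_conv_exp)

lemma square_integrable_shift:
  assumes "square_integrable g"
  shows "square_integrable (\<lambda>t. g (t - a))"
  unfolding square_integrable_def
proof
  have "g \<in> borel_measurable borel" using assms by (simp add: square_integrable_def)
  then show "(\<lambda>t. g (t - a)) \<in> borel_measurable lborel" by measurable
  have "integrable lborel (\<lambda>t. (norm (g t))\<^sup>2)" using assms by (simp add: square_integrable_def)
  from lborel_integrable_real_affine[OF this, of 1 "-a"]
  show "integrable lborel (\<lambda>t. (norm (g (t - a)))\<^sup>2)" by simp
qed

lemma integrable_mult_cnj_phase:
  assumes f: "square_integrable f" and g: "square_integrable g"
    and \<phi>: "\<phi> \<in> borel_measurable borel"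
  shows "integrable lborel (\<lambda>t. f t * cnj (g t) * cis (\<phi> t))"
proof (rule Bochner_Integration.integrable_bound)
  show "integrable lborel (\<lambda>t. (norm (f t))\<^sup>2 + (norm (g t))\<^sup>2)"
    using f g by (simp add: square_integrable_def)
  show "(\<lambda>t. f t * cnj (g t) * cis (\<phi> t)) \<in> borel_measurable lborel"
  proof -
    have "f \<in> borel_measurable borel" "g \<in> borel_measurable borel"
      using f g by (simp_all add: square_integrable_def)
    then show ?thesis
      using \<phi> by (intro borel_measurable_times borel_measurable_continuous_on[of cnj]
          borel_measurable_continuous_on[of cis] continuous_on_cnj continuous_on_cis continuous_on_id) simp_all
  qed
  show "AE t in lborel. norm (f t * cnj (g t) * cis (\<phi> t)) \<le> norm ((norm (f t))\<^sup>2 + (norm (g t))\<^sup>2)"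
  proof (rule AE_I2)
    fix t
    have "norm (f t) * norm (g t) \<le> 2 * norm (f t) * norm (g t)" by simp
    also have "\<dots> \<le> (norm (f t))\<^sup>2 + (norm (g t))\<^sup>2" by (rule sum_squares_bound)
    finally show "norm (f t * cnj (g t) * cis (\<phi> t)) \<le> norm ((norm (f t))\<^sup>2 + (norm (g t))\<^sup>2)"
      by (simp add: norm_mult)
  qed
qed

lemma integral_shifted_modulated_eq_cross_amb:
  "(LINT t|lborel. f (t - a) * cnj (g (t - b)) * cis (2 * pi * (\<mu> * (t - a) + \<nu> * t - \<omega> * (t - b)))) =
   cis (2 * pi * (\<mu> * (b - a) + \<nu> * b)) * cross_amb f g (b - a) (\<omega> - \<mu> - \<nu>)"
proof -
  have phase: "f (t - a) * cnj (g (t - b)) * cis (2 * pi * (\<mu> * (t - a) + \<nu> * t - \<omega> * (t - b))) =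
      cis (2 * pi * (\<mu> * (b - a) + \<nu> * b)) *
      (f (t - a) * cnj (g (t - b)) * cis (- (2 * pi * (\<omega> - \<mu> - \<nu>) * (t - b))))" for t
  proof -
    have "cis (2 * pi * (\<mu> * (t - a) + \<nu> * t - \<omega> * (t - b))) =
        cis (2 * pi * (\<mu> * (b - a) + \<nu> * b)) * cis (- (2 * pi * (\<omega> - \<mu> - \<nu>) * (t - b)))"
      by (simp add: cis_mult algebra_simps)
    then show ?thesis by (simp only: mult_ac)
  qed
  have "cross_amb f g (b - a) (\<omega> - \<mu> - \<nu>) =
      (LINT t|lborel. f (t - a) * cnj (g (t - b)) * cis (- (2 * pi * (\<omega> - \<mu> - \<nu>) * (t - b))))"
    unfolding cross_amb_def exp_minus_ii_of_real
    by (subst lborel_integral_real_affine[where c=1 and t="-a"]) simp_all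
  then show ?thesis
    unfolding phase by simp
qed

lemma ideal_filters_cross_amb_lattice:
  assumes "ideal_filters gtx grx \<tau>max \<nu>max T \<Delta>"
    and "\<bar>\<tau>\<bar> \<le> \<tau>max" and "\<bar>\<nu>\<bar> \<le> \<nu>max"
  shows "cross_amb gtx grx (of_int p * T - \<tau>) (of_int q * \<Delta> - \<nu>) = (if p = 0 \<and> q = 0 then 1 else 0)"
proof (cases "p = 0 \<and> q = 0")
  case True
  then show ?thesis using assms unfolding ideal_filters_def by (auto simp: abs_le_iff)
next
  case False
  then have "(p, q) \<noteq> (0, 0)" by simp
  with assms(1) have "\<forall>\<tau>' \<nu>'. \<tau>' \<in> {of_int p * T - \<tau>max .. of_int p * T + \<tau>max} \<and>
      \<nu>' \<in> {of_int q * \<Delta> - \<nu>max .. of_int q * \<Delta> + \<nu>max} \<longrightarrow> cross_amb gtx grx \<tau>' \<nu>' = 0"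
    unfolding ideal_filters_def by blast
  then show ?thesis using False assms(2,3) by (auto simp: abs_le_iff)
qed

lemma Y_TF_y_rx_multiplicative:
  assumes gtx: "square_integrable gtx" and grx: "square_integrable grx"
    and ideal: "ideal_filters gtx grx \<tau>max \<nu>max T \<Delta>"
    and delays: "\<forall>n'<N. r (real n' * T) / c \<in> {0..\<tau>max}"
    and doppler: "\<bar>v / lam\<bar> \<le> \<nu>max"
    and n: "n < N" and m: "m < M"
  shows "Y_TF T \<Delta> grx (y_rx N M T \<Delta> gtx XTF \<alpha> r c v lam) n m =
    \<alpha> * XTF n m * cis (2 * pi * (v / lam * (real n * T) - real m * \<Delta> * (r (real n * T) / c)))"
proof -
  define \<tau> where "\<tau> n' = r (real n' * T) / c" for n'
  define \<nu> where "\<nu> = v / lam"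
  define h where "h n' m' t = gtx (t - (\<tau> n' + real n' * T)) * cnj (grx (t - real n * T)) *
     cis (2 * pi * (real m' * \<Delta> * (t - (\<tau> n' + real n' * T)) + \<nu> * t - real m * \<Delta> * (t - real n * T)))"
    for n' m' t
  have integrand: "y_rx N M T \<Delta> gtx XTF \<alpha> r c v lam t * cnj (grx (t - real n * T)) *
      exp (- \<i> * of_real (2 * pi * real m * \<Delta> * (t - real n * T))) =
      (\<Sum>n'<N. \<Sum>m'<M. \<alpha> * XTF n' m' * h n' m' t)" for t
  proof -
    have "cis (2 * pi * real m' * \<Delta> * (t - \<tau> n' - real n' * T)) * cis (2 * pi * \<nu> * t) *
        cis (- (2 * pi * real m * \<Delta> * (t - real n * T))) =
        cis (2 * pi * (real m' * \<Delta> * (t - (\<tau> n' + real n' * T)) + \<nu> * t - real m * \<Delta> * (t - real n * T)))"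
      for n' m' by (simp add: cis_mult algebra_simps)
    then show ?thesis
      unfolding y_rx_def x_sym_def h_def exp_ii_of_real exp_minus_ii_of_real \<tau>_def [symmetric] \<nu>_def [symmetric]
        sum_distrib_left sum_distrib_right
      by (intro sum.cong refl) (simp add: mult_ac diff_diff_eq)
  qed
  have integrable: "integrable lborel (h n' m')" for n' m'
    unfolding h_def by (intro integrable_mult_cnj_phase square_integrable_shift gtx grx) measurable
  have integral: "integral\<^sup>L lborel (h n' m') = (if n' = n \<and> m' = m then cis (2 * pi * (\<nu> * (real n * T) - real m * \<Delta> * \<tau> n)) else 0)"
    if "n' < N" for n' m'
  proof -
    have "\<bar>\<tau> n'\<bar> \<le> \<tau>max" using delays that by (auto simp: \<tau>_def)
    from ideal_filters_cross_amb_lattice[OF ideal this, of \<nu> "int n - int n'" "int m - int m'"]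
    have "cross_amb gtx grx (real n * T - (\<tau> n' + real n' * T)) (real m * \<Delta> - real m' * \<Delta> - \<nu>) =
        (if n' = n \<and> m' = m then 1 else 0)"
      using doppler by (simp add: \<nu>_def algebra_simps)
    then show ?thesis
      unfolding h_def integral_shifted_modulated_eq_cross_amb by (auto simp: algebra_simps)
  qed
  have "Y_TF T \<Delta> grx (y_rx N M T \<Delta> gtx XTF \<alpha> r c v lam) n m =
      (\<Sum>n'<N. \<Sum>m'<M. \<alpha> * XTF n' m' * integral\<^sup>L lborel (h n' m'))"
    unfolding Y_TF_def integrand using integrable by simp
  also have "\<dots> = (\<Sum>n'<N. \<Sum>m'<M. if n' = n \<and> m' = m then
      \<alpha> * XTF n' m' * cis (2 * pi * (\<nu> * (real n * T) - real m * \<Delta> * \<tau> n)) else 0)"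
    by (intro sum.cong refl) (simp add: integral)
  also have "\<dots> = (\<Sum>n'<N. if n' = n then \<Sum>m'<M. if m' = m then
      \<alpha> * XTF n' m' * cis (2 * pi * (\<nu> * (real n * T) - real m * \<Delta> * \<tau> n)) else 0 else 0)"
    by (intro sum.cong refl) auto
  also have "\<dots> = \<alpha> * XTF n m * cis (2 * pi * (\<nu> * (real n * T) - real m * \<Delta> * \<tau> n))"
    using n m by simp
  finally show ?thesis by (simp add: \<tau>_def \<nu>_def)
qed

definition effective_dd_channel :: "nat \<Rightarrow> nat \<Rightarrow> (nat \<Rightarrow> nat \<Rightarrow> complex) \<Rightarrow> int \<Rightarrow> int \<Rightarrow> complex" where
  "effective_dd_channel N M H k l = (1 / of_nat (N * M)) *
     (\<Sum>n<N. \<Sum>m<M. H n m * cis (- (2 * pi * (real n * of_int k / real N - real m * of_int l / real M))))"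

lemma Y_DD_multiplicative_channel:
  assumes "\<And>n m. n < N \<Longrightarrow> m < M \<Longrightarrow> YTF n m = \<alpha> * X_TF N M X n m * H n m"
  shows "Y_DD N M YTF k l = \<alpha> * (\<Sum>k'<N. \<Sum>l'<M. X k' l' * effective_dd_channel N M H (int k - int k') (int l - int l'))"
proof -
  define s where "s = complex_of_real (sqrt (real (N * M)))"
  define \<phi> where "\<phi> n m k l = 2 * pi * (real n * real k / real N - real m * real l / real M)" for n m k l :: nat
  have s2: "s * s = of_nat (N * M)"
    unfolding s_def of_real_mult [symmetric] by simp
  have phase: "cis (\<phi> n m k' l') * cis (- \<phi> n m k l) =
      cis (- (2 * pi * (real n * of_int (int k - int k') / real N - real m * of_int (int l - int l') / real M)))"
    for n m k' l'
    unfolding \<phi>_def by (simp add: cis_mult algebra_simps diff_divide_distrib)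
  have "Y_DD N M YTF k l = 1 / s * (\<Sum>n<N. \<Sum>m<M. \<alpha> * X_TF N M X n m * H n m * cis (- \<phi> n m k l))"
    unfolding Y_DD_def exp_minus_ii_of_real \<phi>_def s_def using assms
    by (intro arg_cong[where f="\<lambda>z. _ * z"] sum.cong refl) simp
  also have "\<dots> = 1 / s * (\<Sum>n<N. \<Sum>m<M. \<Sum>k'<N. \<Sum>l'<M.
      \<alpha> * (1 / s * (X k' l' * (cis (\<phi> n m k' l') * (H n m * cis (- \<phi> n m k l))))))"
    unfolding X_TF_def exp_ii_of_real \<phi>_def s_def
    by (simp only: sum_distrib_left sum_distrib_right mult.assoc)
  also have "\<dots> = (\<Sum>n<N. \<Sum>m<M. \<Sum>k'<N. \<Sum>l'<M.
      \<alpha> / (s * s) * (X k' l' * (H n m * (cis (\<phi> n m k' l') * cis (- \<phi> n m k l)))))"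
    unfolding sum_distrib_left by (intro sum.cong refl) (simp add: mult_ac)
  also have "\<dots> = (\<Sum>k'<N. \<Sum>l'<M. \<Sum>n<N. \<Sum>m<M.
      \<alpha> / (s * s) * (X k' l' * (H n m * (cis (\<phi> n m k' l') * cis (- \<phi> n m k l)))))"
    by (subst sum.swap, subst (2) sum.swap, subst (2) sum.swap, subst (3) sum.swap) (rule refl)
  also have "\<dots> = \<alpha> * (\<Sum>k'<N. \<Sum>l'<M. X k' l' * effective_dd_channel N M H (int k - int k') (int l - int l'))"
    unfolding effective_dd_channel_def phase s2 sum_distrib_left by (intro sum.cong refl) (simp add: mult_ac)
  finally show ?thesis .
qed

lemma sum_lessThan_mult_blocks:
  fixes g :: "nat \<Rightarrow> 'a::comm_monoid_add"
  shows "(\<Sum>n<B * K. g n) = (\<Sum>b<B. \<Sum>q<K. g (b * K + q))"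
proof -
  have "(\<Sum>n<B * K. g n) = (\<Sum>b<B. sum g {b * K..<b * K + K})"
    by (rule sum.nat_group [symmetric])
  also have "\<dots> = (\<Sum>b<B. \<Sum>q<K. g (b * K + q))"
  proof (rule sum.cong [OF refl])
    show "sum g {b * K..<b * K + K} = (\<Sum>q<K. g (b * K + q))" for b
      using sum.shift_bounds_nat_ivl[of g 0 "b * K" K] by (simp add: atLeast0LessThan add.commute)
  qed
  finally show ?thesis .
qed

lemma dirichlet_eq_sum_cis: "dirichlet Q x = 1 / of_nat Q * (\<Sum>q<Q. cis (- (2 * pi * x * real q)))"
  unfolding dirichlet_def exp_minus_ii_of_real ..

lemma effective_dd_channel_stop_and_go:
  assumes N: "N = B * K" and B: "B > 0"
    and stop: "\<And>b q. b < B \<Longrightarrow> q < K \<Longrightarrow> r (real (b * K + q) * T) = r (real b * (real N * T / real B))"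
  shows "effective_dd_channel N M (\<lambda>n m. cis (2 * pi * (v / lam * (real n * T) - real m * \<Delta> * (r (real n * T) / c)))) k l =
    Phi N M B T \<Delta> c v lam r k l"
proof -
  define x where "x = of_int k / real N - v * T / lam"
  define y where "y b = - (of_int l / real M - r (real b * (real N * T / real B)) * \<Delta> / c)" for b
  define P where "P b = cis (- (2 * pi * x * (real b * real N / real B)))" for b
  define Q where "Q q = cis (- (2 * pi * x * real q))" for q
  define R where "R b m = cis (- (2 * pi * y b * real m))" for b m
  have "Phi N M B T \<Delta> c v lam r k l =
      1 / of_nat B * (\<Sum>b<B. P b * (1 / of_nat K * (\<Sum>q<K. Q q)) * (1 / of_nat M * (\<Sum>m<M. R b m)))"
    unfolding Phi_def dirichlet_eq_sum_cis exp_minus_ii_of_real P_def Q_def R_def x_def y_def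
    using N B by simp
  also have "\<dots> = 1 / of_nat B * (\<Sum>b<B. 1 / (of_nat K * of_nat M) * (\<Sum>q<K. \<Sum>m<M. P b * Q q * R b m))"
  proof -
    have "(\<Sum>q<K. \<Sum>m<M. P b * Q q * R b m) = P b * ((\<Sum>q<K. Q q) * (\<Sum>m<M. R b m))" for b
      unfolding sum_product by (simp only: sum_distrib_left mult.assoc)
    then show ?thesis by (simp add: divide_inverse mult_ac)
  qed
  also have "\<dots> = 1 / of_nat (N * M) * (\<Sum>b<B. \<Sum>q<K. \<Sum>m<M. P b * Q q * R b m)"
    using N by (simp add: mult_ac flip: sum_divide_distrib)
  also have "\<dots> = effective_dd_channel N M (\<lambda>n m. cis (2 * pi * (v / lam * (real n * T) - real m * \<Delta> * (r (real n * T) / c)))) k l"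
  proof -
    have "cis (2 * pi * (v / lam * (real (b * K + q) * T) - real m * \<Delta> * (r (real (b * K + q) * T) / c))) *
        cis (- (2 * pi * (real (b * K + q) * of_int k / real N - real m * of_int l / real M))) = P b * Q q * R b m"
      if "b < B" "q < K" for b q m
    proof -
      have "real b * real N / real B = real b * real K" using N B by simp
      then show ?thesis
        unfolding P_def Q_def R_def x_def y_def stop[OF that]
        by (simp add: cis_mult algebra_simps add_divide_distrib)
    qed
    then show ?thesis
      unfolding effective_dd_channel_def N sum_lessThan_mult_blocks by simp
  qed
  finally show ?thesis ..
qed

theorem proposition2:
  fixes M N B :: nat and \<Delta> T TB c lam \<tau>max \<nu>max v :: real and \<alpha> :: complex
    and r :: "real \<Rightarrow> real" and gtx grx :: "real \<Rightarrow> complex"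
    and XDD :: "nat \<Rightarrow> nat \<Rightarrow> complex"
  assumes "M > 0" and "N > 0" and "B > 0" and "B dvd N"
    and "\<Delta> > 0" and "T = 1 / \<Delta>" and "TB = real N * T / real B"
    and "c > 0" and "lam > 0"
    and "\<tau>max \<in> {0..<T}" and "\<nu>max \<in> {0..<\<Delta>}" and "v \<in> {0..lam * \<nu>max}"
    and "\<forall>n<N. r (real n * T) / c \<in> {0..\<tau>max}"
    and "\<forall>b<B. \<forall>n. b * N div B \<le> n \<and> n \<le> (b + 1) * N div B - 1 \<longrightarrow>
            r (real n * T) = r (real b * TB)"
    and "square_integrable gtx" and "square_integrable grx"
    and "ideal_filters gtx grx \<tau>max \<nu>max T \<Delta>"
  shows "\<forall>k<N. \<forall>l<M.
           Y_DD N M (Y_TF T \<Delta> grx (y_rx N M T \<Delta> gtx (X_TF N M XDD) \<alpha> r c v lam)) k l =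
           \<alpha> * (\<Sum>k'<N. \<Sum>l'<M. XDD k' l' *
                   Phi N M B T \<Delta> c v lam r (int k - int k') (int l - int l'))"
proof (intro allI impI)
  fix k l
  obtain K where N: "N = B * K" using \<open>B dvd N\<close> by (rule dvdE)
  have stop: "r (real (b * K + q) * T) = r (real b * (real N * T / real B))" if "b < B" "q < K" for b q
  proof -
    have "b * N div B = b * K" and "(b + 1) * N div B = (b + 1) * K"
      using N \<open>B > 0\<close> by simp_all
    then have "b * N div B \<le> b * K + q \<and> b * K + q \<le> (b + 1) * N div B - 1"
      using that by simp
    then have "r (real (b * K + q) * T) = r (real b * TB)"
      using assms(14) that(1) by blast
    then show ?thesis using \<open>TB = real N * T / real B\<close> by simp
  qed
  have doppler: "\<bar>v / lam\<bar> \<le> \<nu>max"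
    using \<open>lam > 0\<close> \<open>v \<in> {0..lam * \<nu>max}\<close> by (auto simp: divide_le_eq mult.commute)
  define H where "H = (\<lambda>n m. cis (2 * pi * (v / lam * (real n * T) - real m * \<Delta> * (r (real n * T) / c))))"
  have channel: "Y_TF T \<Delta> grx (y_rx N M T \<Delta> gtx (X_TF N M XDD) \<alpha> r c v lam) n m = \<alpha> * X_TF N M XDD n m * H n m"
    if "n < N" "m < M" for n m
    unfolding H_def using Y_TF_y_rx_multiplicative[OF assms(15-17,13) doppler that] .
  have kernel: "effective_dd_channel N M H = Phi N M B T \<Delta> c v lam r"
    unfolding H_def by (intro ext effective_dd_channel_stop_and_go[OF N \<open>B > 0\<close> stop])
  show "Y_DD N M (Y_TF T \<Delta> grx (y_rx N M T \<Delta> gtx (X_TF N M XDD) \<alpha> r c v lam)) k l =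
      \<alpha> * (\<Sum>k'<N. \<Sum>l'<M. XDD k' l' * Phi N M B T \<Delta> c v lam r (int k - int k') (int l - int l'))"
    using Y_DD_multiplicative_channel[OF channel] unfolding kernel .
qed

end
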